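(* Let $G=\mathbb{Z}\oplus\mathbb{Z}$, written as integer column vectors, and for $(i,j)\neq(0,0)$ let $[i/j]$ denote the unique maximal cyclic subgroup of $G$ containing $\binom{i}{j}$. Let $\nu,\mu$ be integers with $\gcd(\nu,\mu)=1$, $\mu>0$ and $0\le\nu<\mu$. Then the only automorphisms of $G$ that preserve each of $[\nu/\mu]$ and $[1/0]$ are among $$\phi_1=\pm\begin{pmatrix}1&0\\0&1\end{pmatrix},\quad \phi_2=\pm\begin{pmatrix}-1&1\\0&1\end{pmatrix},\quad \phi_3=\pm\begin{pmatrix}-1&0\\0&1\end{pmatrix}.$$ Only $\phi_1$ works for all $[\nu/\mu]$, $\phi_2$ works only for $[1/2]$, and $\phi_3$ works only for $[0/1]$.
   Context: Automorphisms of $\mathbb{Z}\oplus\mathbb{Z}$ are identified with $2\times 2$ integer matrices of determinant $\pm1$ acting on column vectors on the left. An automorphism preserves a subgroup if it maps it onto itself. *)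

theory Defs
  imports "HOL-Analysis.Analysis"
begin

text \<open>Elements of G = Z + Z are integer column vectors of type int^2; automorphisms
are 2x2 integer matrices (type int^2^2) of determinant 1 or -1, acting by A *v x.\<close>

definition col :: "int \<Rightarrow> int \<Rightarrow> int ^ 2" where
  "col i j = vector [i, j]"

definition mat2 :: "int \<Rightarrow> int \<Rightarrow> int \<Rightarrow> int \<Rightarrow> int ^ 2 ^ 2" where
  "mat2 a b c d = vector [vector [a, b], vector [c, d]]"

definition is_automorphism :: "int ^ 2 ^ 2 \<Rightarrow> bool" where
  "is_automorphism A \<longleftrightarrow> det A = 1 \<or> det A = -1"

definition cyclic_gen :: "int ^ 2 \<Rightarrow> (int ^ 2) set" where
  "cyclic_gen w = range (\<lambda>k::int. k *s w)"

definition is_cyclic_subgroup :: "(int ^ 2) set \<Rightarrow> bool" where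
  "is_cyclic_subgroup H \<longleftrightarrow> (\<exists>w. H = cyclic_gen w)"

definition max_cyclic :: "int \<Rightarrow> int \<Rightarrow> (int ^ 2) set" where
  "max_cyclic i j = (THE H. is_cyclic_subgroup H \<and> col i j \<in> H \<and>
      (\<forall>K. is_cyclic_subgroup K \<and> H \<subseteq> K \<longrightarrow> K = H))"

definition preserves :: "int ^ 2 ^ 2 \<Rightarrow> (int ^ 2) set \<Rightarrow> bool" where
  "preserves A H \<longleftrightarrow> (\<lambda>x. A *v x) ` H = H"

end

theory Submission
  imports Defs
begin

text \<open>For coprime \<open>i, j\<close> the maximal cyclic subgroup \<open>[i/j]\<close> is \<open>\<int>\<cdot>(i,j)\<close>, and a matrix
preserves it iff it sends \<open>(i,j)\<close> to \<open>\<plusminus>(i,j)\<close>. Preserving \<open>[1/0]\<close> makes the first column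
\<open>\<plusminus>e\<^sub>1\<close>; preserving \<open>[\<nu>/\<mu>]\<close> then makes the lower right entry \<open>\<delta> = \<plusminus>1\<close> and leaves
\<open>b\<mu> = (\<delta> - a)\<nu>\<close>. Either \<open>a = \<delta>\<close> and \<open>b = 0\<close>, or \<open>(\<delta>b)\<mu> = 2\<nu>\<close>, which together with
\<open>0 \<le> \<nu> < \<mu>\<close> and \<open>gcd \<nu> \<mu> = 1\<close> only allows \<open>[0/1]\<close> and \<open>[1/2]\<close>.\<close>

lemma vec2_eq_iff: "(x::'a^2) = y \<longleftrightarrow> x$1 = y$1 \<and> x$2 = y$2"
  by (simp add: vec_eq_iff forall_2)

lemma col_nth [simp]: "col i j $ 1 = i" "col i j $ 2 = j"
  by (simp_all add: col_def)

lemma mat2_nth [simp]: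
  "mat2 a b c d $ 1 $ 1 = a" "mat2 a b c d $ 1 $ 2 = b"
  "mat2 a b c d $ 2 $ 1 = c" "mat2 a b c d $ 2 $ 2 = d"
  by (simp_all add: mat2_def)

lemma col_eq_iff: "col i j = col i' j' \<longleftrightarrow> i = i' \<and> j = j'"
  by (simp add: vec2_eq_iff)

lemma uminus_col: "- col i j = col (-i) (-j)"
  by (simp add: vec2_eq_iff)

lemma mat2_eq_iff: "mat2 a b c d = mat2 a' b' c' d' \<longleftrightarrow> (a, b, c, d) = (a', b', c', d')"
  by (auto simp: vec2_eq_iff)

lemma uminus_mat2: "- mat2 a b c d = mat2 (-a) (-b) (-c) (-d)"
  by (simp add: vec2_eq_iff)

lemma mat2_surj: obtains a b c d where "A = mat2 a b c d"
  using that[of "A$1$1" "A$1$2" "A$2$1" "A$2$2"] by (simp add: vec2_eq_iff)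

lemma mat2_mult_col: "mat2 a b c d *v col x y = col (a*x + b*y) (c*x + d*y)"
  by (simp add: vec2_eq_iff matrix_vector_mult_def sum_2)

lemma self_in_cyclic_gen: "v \<in> cyclic_gen v"
  unfolding cyclic_gen_def by (rule range_eqI[of _ _ 1]) simp

lemma cyclic_gen_uminus: "cyclic_gen (- v) = cyclic_gen v"
proof -
  have "(\<lambda>k::int. k *s - v) = (\<lambda>k. k *s v) \<circ> uminus"
    by (simp add: fun_eq_iff vec2_eq_iff)
  moreover have "range (uminus :: int \<Rightarrow> int) = UNIV"
    by (metis surj_def minus_minus)
  ultimately show ?thesis
    unfolding cyclic_gen_def by (simp only: image_comp[symmetric])
qed

lemma primitive_eq_smult_imp:
  fixes v w :: "int^2"
  assumes "coprime (v$1) (v$2)" and "v = k *s w"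
  shows "w = v \<or> w = - v"
proof -
  have "k dvd v$1" "k dvd v$2" using assms(2) by simp_all
  with assms(1) have "is_unit k" using coprime_common_divisor by blast
  then have "k = 1 \<or> k = -1" by auto
  with assms(2) show ?thesis by (auto simp: vec2_eq_iff)
qed

lemma cyclic_gen_eq_primitive_iff:
  fixes v w :: "int^2"
  assumes "coprime (v$1) (v$2)"
  shows "cyclic_gen w = cyclic_gen v \<longleftrightarrow> w = v \<or> w = - v"
proof
  assume "cyclic_gen w = cyclic_gen v"
  then obtain k where "v = k *s w"
    using self_in_cyclic_gen[of v] unfolding cyclic_gen_def by auto
  with assms show "w = v \<or> w = - v" by (rule primitive_eq_smult_imp)
qed (auto simp: cyclic_gen_uminus)

lemma max_cyclic_coprime:
  assumes "coprime i j"
  shows "max_cyclic i j = cyclic_gen (col i j)"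
proof -
  have generated: "H = cyclic_gen (col i j)"
    if "is_cyclic_subgroup H" and "col i j \<in> H" for H
  proof -
    obtain w where H: "H = cyclic_gen w"
      using \<open>is_cyclic_subgroup H\<close> unfolding is_cyclic_subgroup_def by blast
    with \<open>col i j \<in> H\<close> obtain k where "col i j = k *s w"
      unfolding cyclic_gen_def by auto
    then have "w = col i j \<or> w = - col i j"
      by (rule primitive_eq_smult_imp[rotated]) (simp add: assms)
    with H show ?thesis by (auto simp: cyclic_gen_uminus)
  qed
  show ?thesis
    unfolding max_cyclic_def
  proof (rule the_equality)
    show "is_cyclic_subgroup (cyclic_gen (col i j)) \<and> col i j \<in> cyclic_gen (col i j) \<and>
        (\<forall>K. is_cyclic_subgroup K \<and> cyclic_gen (col i j) \<subseteq> K \<longrightarrow> K = cyclic_gen (col i j))"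
      using generated self_in_cyclic_gen unfolding is_cyclic_subgroup_def by blast
  qed (use generated in blast)
qed

lemma image_cyclic_gen: "(\<lambda>x. A *v x) ` cyclic_gen v = cyclic_gen (A *v v)"
proof -
  have "A *v (k *s v) = k *s (A *v v)" for k :: int
    by (simp add: vec2_eq_iff matrix_vector_mult_def sum_2 algebra_simps)
  then show ?thesis
    unfolding cyclic_gen_def image_image by simp
qed

lemma preserves_max_cyclic_iff:
  assumes "coprime i j"
  shows "preserves A (max_cyclic i j) \<longleftrightarrow> A *v col i j = col i j \<or> A *v col i j = - col i j"
  using assms
  by (simp add: preserves_def max_cyclic_coprime image_cyclic_gen cyclic_gen_eq_primitive_iff)

lemma proper_fraction_double_cases:
  fixes \<nu> \<mu> b :: int
  assumes "coprime \<nu> \<mu>" and "0 \<le> \<nu>" and "\<nu> < \<mu>" and "b * \<mu> = 2 * \<nu>"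
  shows "b = 0 \<and> \<nu> = 0 \<and> \<mu> = 1 \<or> b = 1 \<and> \<nu> = 1 \<and> \<mu> = 2"
proof -
  have "0 \<le> b" using assms by (smt (verit) mult_neg_pos)
  moreover have "b < 2"
  proof (rule ccontr)
    assume "\<not> b < 2"
    with assms have "2 * \<mu> \<le> b * \<mu>" by (intro mult_right_mono) auto
    with assms show False by linarith
  qed
  ultimately consider "b = 0" | "b = 1" by linarith
  then show ?thesis
  proof cases
    case 1
    with assms show ?thesis by simp
  next
    case 2
    with assms have "\<mu> = 2 * \<nu>" by simp
    with assms(1,2) have "\<nu> = 1" by simp
    with \<open>\<mu> = 2 * \<nu>\<close> 2 show ?thesis by simp
  qed
qed

lemma stabiliser_entries_iff:
  fixes \<nu> \<mu> a b c d :: int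
  assumes "coprime \<nu> \<mu>" and "0 \<le> \<nu>" and "\<nu> < \<mu>"
  shows "((a = 1 \<and> c = 0) \<or> (a = -1 \<and> c = 0)) \<and>
      ((a*\<nu> + b*\<mu> = \<nu> \<and> c*\<nu> + d*\<mu> = \<mu>) \<or> (a*\<nu> + b*\<mu> = -\<nu> \<and> c*\<nu> + d*\<mu> = -\<mu>))
    \<longleftrightarrow> mat2 a b c d = mat2 1 0 0 1 \<or> mat2 a b c d = - mat2 1 0 0 1 \<or>
      ((mat2 a b c d = mat2 (-1) 1 0 1 \<or> mat2 a b c d = - mat2 (-1) 1 0 1) \<and> \<nu> = 1 \<and> \<mu> = 2) \<or>
      ((mat2 a b c d = mat2 (-1) 0 0 1 \<or> mat2 a b c d = - mat2 (-1) 0 0 1) \<and> \<nu> = 0 \<and> \<mu> = 1)"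
    (is "?stable \<longleftrightarrow> ?listed")
proof
  assume stable: ?stable
  then have c: "c = 0" and a: "a = 1 \<or> a = -1" by auto
  from stable c have "(d * \<mu> = 1 * \<mu> \<and> b * \<mu> = (1 - a) * \<nu>) \<or>
      (d * \<mu> = (-1) * \<mu> \<and> b * \<mu> = (-1 - a) * \<nu>)"
    by (auto simp: algebra_simps)
  then obtain \<delta> where \<delta>: "\<delta> = 1 \<or> \<delta> = -1"
    and "d * \<mu> = \<delta> * \<mu>" and b: "b * \<mu> = (\<delta> - a) * \<nu>"
    by blast
  then have d: "d = \<delta>" using assms by simp
  from a \<delta> consider "a = \<delta>" | "a = - \<delta>" by linarith
  then show ?listed
  proof cases
    case 1
    with b assms have "b = 0" by simp
    with 1 c d \<delta> show ?thesis by (auto simp: uminus_mat2 mat2_eq_iff)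
  next
    case 2
    with b \<delta> have "(\<delta> * b) * \<mu> = 2 * \<nu>" by (auto simp: algebra_simps)
    from proper_fraction_double_cases[OF assms this] have
      "\<delta> * b = 0 \<and> \<nu> = 0 \<and> \<mu> = 1 \<or> \<delta> * b = 1 \<and> \<nu> = 1 \<and> \<mu> = 2" .
    with 2 c d \<delta> show ?thesis by (auto simp: uminus_mat2 mat2_eq_iff)
  qed
qed (auto simp: uminus_mat2 mat2_eq_iff)

theorem mainTheorem3:
  fixes \<nu> \<mu> :: int and A :: "int ^ 2 ^ 2"
  assumes "gcd \<nu> \<mu> = 1" and "\<mu> > 0" and "0 \<le> \<nu>" and "\<nu> < \<mu>"
    and "is_automorphism A"
  shows "(preserves A (max_cyclic \<nu> \<mu>) \<and> preserves A (max_cyclic 1 0)) \<longleftrightarrow>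
     (A = mat2 1 0 0 1 \<or> A = - mat2 1 0 0 1 \<or>
      ((A = mat2 (-1) 1 0 1 \<or> A = - mat2 (-1) 1 0 1) \<and> \<nu> = 1 \<and> \<mu> = 2) \<or>
      ((A = mat2 (-1) 0 0 1 \<or> A = - mat2 (-1) 0 0 1) \<and> \<nu> = 0 \<and> \<mu> = 1))"
proof -
  obtain a b c d where A: "A = mat2 a b c d" by (rule mat2_surj)
  have coprime: "coprime \<nu> \<mu>" using assms(1) by (simp add: coprime_iff_gcd_eq_1)
  have "(preserves A (max_cyclic \<nu> \<mu>) \<and> preserves A (max_cyclic 1 0)) \<longleftrightarrow>
      ((a = 1 \<and> c = 0) \<or> (a = -1 \<and> c = 0)) \<and>
      ((a*\<nu> + b*\<mu> = \<nu> \<and> c*\<nu> + d*\<mu> = \<mu>) \<or> (a*\<nu> + b*\<mu> = -\<nu> \<and> c*\<nu> + d*\<mu> = -\<mu>))"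
    using coprime by (auto simp: A preserves_max_cyclic_iff mat2_mult_col uminus_col col_eq_iff)
  also note stabiliser_entries_iff[OF coprime assms(3,4), where a = a and b = b and c = c and d = d]
  finally show ?thesis by (simp only: A)
qed

end
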